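(* In the setting below, assume $$15.2\sqrt{\frac{\mathbb E\|X-\mu\|^4-(\mathrm{tr}(\Sigma))^2}{(\mathrm{tr}(\Sigma))^2}}\le\Big(\frac12-178\frac{\log(1.4/\delta)}{n}\Big)\sqrt{\frac{n}{\log(1.4/\delta)}}.$$ Let $r_n=11\sqrt2\sqrt{\hat T\log(1.4/\delta)/n}$. Then $$\Pr\big(\mu\in B(\hat\mu,r_n)\big)\ge1-2\delta,$$ where $B(h,r)$ is the closed ball of radius $r$ centered at $h$.
   Context: Let $\mathbb H$ be a separable Hilbert space. Let $X_1,\ldots,X_n\in\mathbb H$ be i.i.d. copies of $X$ with mean $\mu$, covariance operator $\Sigma$, $0<\mathrm{tr}(\Sigma)=\mathbb E\|X-\mu\|^2$, and $\mathbb E\|X-\mu\|^4<\infty$. Let $\alpha_\ast=7/18$ and $p_\ast=0.1$. For $0<p<a<\tfrac12$, $\psi(a;p)=(1-a)\log\frac{1-a}{1-p}+a\log\frac ap$. Given $\delta\in(0,1)$, set $k=\lfloor\log(1/\delta)/\psi(\alpha_\ast;p_\ast)\rfloor+1$, and assume $k\le n/2$. Split $\{1,\ldots,n\}$ into disjoint groups $G_1,\ldots,G_k$ of size $\lfloor n/k\rfloor$. Define: - $\hat\mu_j=\frac1{|G_j|}\sum_{i\in G_j}X_i$; - $\hat\mu$ a geometric median of $\hat\mu_1,\ldots,\hat\mu_k$, i.e. any minimizer over $y\in\mathbb H$ of $\sum_j\|y-\hat\mu_j\|$; - $\hat T_j=\frac1{|G_j|}\sum_{i\in G_j}\|X_i-\hat\mu_j\|^2$;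 - $\hat T$ any median of the reals $\hat T_1,\ldots,\hat T_k$, i.e. any minimizer over $y\in\mathbb R$ of $\sum_j|y-\hat T_j|$. *)

theory Defs
  imports "HOL-Probability.Probability"
begin

text \<open>Binomial Kullback-Leibler type function psi(a;p), for 0 < p < a < 1/2.\<close>
definition psi :: "real \<Rightarrow> real \<Rightarrow> real" where
  "psi a p = (1 - a) * ln ((1 - a) / (1 - p)) + a * ln (a / p)"

definition num_groups :: "real \<Rightarrow> nat" where
  "num_groups \<delta> = nat \<lfloor>ln (1 / \<delta>) / psi (7/18) (1/10)\<rfloor> + 1"

definition is_geometric_median :: "nat \<Rightarrow> (nat \<Rightarrow> 'a::real_normed_vector) \<Rightarrow> 'a \<Rightarrow> bool" where
  "is_geometric_median k v m \<longleftrightarrow>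
     (\<forall>y. (\<Sum>j<k. norm (m - v j)) \<le> (\<Sum>j<k. norm (y - v j)))"

end

theory Submission
  imports Defs
begin

text \<open>Write \<open>s = E \<parallel>X - \<mu>\<parallel>\<^sup>2\<close> and \<open>m\<close> for the block size. Call a block good if its mean lies within
  \<open>sqrt (s / (0.06 m))\<close> of \<open>\<mu>\<close> and its average of \<open>\<parallel>X\<^sub>i - \<mu>\<parallel>\<^sup>2\<close> within \<open>0.33 s\<close> of \<open>s\<close>.
  Chebyshev's inequality, for the sum of the centred vectors and for the sum of the centred squared
  norms (this is where the fourth moment enters), shows that a block is bad with probability at most
  \<open>1/10\<close>. The blocks are independent, so by Chernoff's bound fewer than \<open>7/18\<close> of them are bad
  except with probability \<open>exp (- k psi(7/18; 1/10)) < \<delta>\<close>. On that event Minsker's lemma places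
  the geometric median of the block means within \<open>1.3 sqrt (s / (0.06 m))\<close> of \<open>\<mu>\<close>, while the
  median of the block variances is at least \<open>(0.67 - 1 / (0.06 m)) s\<close>; the sample-size condition
  makes \<open>m\<close> large enough for the resulting empirical radius to dominate the error. The argument
  in fact gives confidence \<open>1 - \<delta>\<close>.\<close>

section \<open>Geometric medians\<close>

lemma norm_add_scaleR_le_quadratic:
  fixes a w :: "'a::real_inner"
  assumes "a \<noteq> 0" "0 \<le> t"
  shows "norm (a + t *\<^sub>R w) \<le> norm a + t * (a \<bullet> w) / norm a + t\<^sup>2 * (norm w)\<^sup>2 / (2 * norm a)"
proof -
  define A where "A = norm a"
  have A: "A > 0" using assms A_def by simp
  define sv where "sv = a \<bullet> w"
  define Wv where "Wv = (norm w)\<^sup>2"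
  have rhs: "norm a + t * (a \<bullet> w) / norm a + t\<^sup>2 * (norm w)\<^sup>2 / (2 * norm a)
        = (A\<^sup>2 + t * sv + t\<^sup>2 * Wv / 2) / A"
    using A unfolding A_def sv_def Wv_def by (simp add: field_simps power2_eq_square)
  have cs: "sv\<^sup>2 \<le> A\<^sup>2 * Wv" unfolding sv_def A_def Wv_def
    using Cauchy_Schwarz_ineq[of a w] by (simp add: power2_norm_eq_inner)
  have "2 * A\<^sup>2 * (A\<^sup>2 + t * sv + t\<^sup>2 * Wv / 2) = (A\<^sup>2 + t * sv)\<^sup>2 + A\<^sup>2 * A\<^sup>2 + t\<^sup>2 * (A\<^sup>2 * Wv - sv\<^sup>2)"
    by (simp add: power2_eq_square algebra_simps)
  also have "\<dots> \<ge> 0" using cs by (intro add_nonneg_nonneg mult_nonneg_nonneg) auto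
  finally have num: "A\<^sup>2 + t * sv + t\<^sup>2 * Wv / 2 \<ge> 0" using A by (simp add: zero_le_mult_iff)
  have "(norm (a + t *\<^sub>R w))\<^sup>2 = A\<^sup>2 + 2 * t * sv + t\<^sup>2 * Wv"
    unfolding A_def sv_def Wv_def power2_norm_eq_inner
    by (simp add: inner_add_left inner_add_right inner_commute power2_eq_square algebra_simps)
  moreover have "(A\<^sup>2 + t * sv + t\<^sup>2 * Wv / 2)\<^sup>2
      = A\<^sup>2 * (A\<^sup>2 + 2 * t * sv + t\<^sup>2 * Wv) + (t * sv + t\<^sup>2 * Wv / 2)\<^sup>2"
    by (simp add: power2_eq_square algebra_simps)
  ultimately have "(norm (a + t *\<^sub>R w))\<^sup>2 * A\<^sup>2 \<le> (A\<^sup>2 + t * sv + t\<^sup>2 * Wv / 2)\<^sup>2"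
    by (simp add: mult.commute)
  then have "(norm (a + t *\<^sub>R w))\<^sup>2 \<le> ((A\<^sup>2 + t * sv + t\<^sup>2 * Wv / 2) / A)\<^sup>2"
    using A by (simp add: power_divide pos_le_divide_eq)
  then have "norm (a + t *\<^sub>R w) \<le> (A\<^sup>2 + t * sv + t\<^sup>2 * Wv / 2) / A"
    by (rule power2_le_imp_le) (use num A in simp)
  then show ?thesis using rhs by simp
qed

lemma inner_le_neg_sqrt_mul_norm:
  fixes z v \<mu> :: "'a::real_inner"
  assumes "norm (v - \<mu>) \<le> r" "r < norm (\<mu> - z)"
  shows "(z - v) \<bullet> (\<mu> - z) \<le> - sqrt ((norm (\<mu> - z))\<^sup>2 - r\<^sup>2) * norm (z - v)"
proof -
  define w where "w = \<mu> - z"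
  define e where "e = \<mu> - v"
  define d where "d = norm w"
  define sv where "sv = e \<bullet> w"
  have zv: "z - v = e - w" unfolding e_def w_def by simp
  have ne: "norm e \<le> r" using assms(1) unfolding e_def by (simp add: norm_minus_commute)
  have r0: "0 \<le> r" using assms(1) norm_ge_zero order_trans by blast
  have dr: "r < d" using assms(2) unfolding d_def w_def .
  have "sv \<le> d * r" unfolding sv_def d_def
    using Cauchy_Schwarz_ineq2[of e w] ne norm_ge_zero
    by (metis abs_ge_self mult.commute mult_left_mono order_trans)
  moreover have "d * r < d * d" using dr r0 by (intro mult_strict_left_mono) auto
  ultimately have pos: "d\<^sup>2 - sv > 0" by (simp add: power2_eq_square)
  have ip: "(z - v) \<bullet> (\<mu> - z) = sv - d\<^sup>2" unfolding zv w_def[symmetric] sv_def d_def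
    by (simp add: inner_diff_left power2_norm_eq_inner)
  have nzv: "(norm (z - v))\<^sup>2 = d\<^sup>2 - 2 * sv + (norm e)\<^sup>2" unfolding zv sv_def d_def
    by (simp add: power2_norm_eq_inner inner_diff_left inner_diff_right inner_commute)
  have "(d\<^sup>2 - sv)\<^sup>2 - (d\<^sup>2 - r\<^sup>2) * (norm (z - v))\<^sup>2
      = (sv - r\<^sup>2)\<^sup>2 + (r\<^sup>2 - (norm e)\<^sup>2) * (d\<^sup>2 - r\<^sup>2)"
    unfolding nzv by (simp add: power2_eq_square algebra_simps)
  moreover have "(r\<^sup>2 - (norm e)\<^sup>2) * (d\<^sup>2 - r\<^sup>2) \<ge> 0"
    using ne r0 dr by (intro mult_nonneg_nonneg) (auto intro: power_mono)
  ultimately have key: "(d\<^sup>2 - r\<^sup>2) * (norm (z - v))\<^sup>2 \<le> (d\<^sup>2 - sv)\<^sup>2"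
    by (smt (verit) zero_le_power2)
  have "sqrt (d\<^sup>2 - r\<^sup>2) * norm (z - v) = sqrt ((d\<^sup>2 - r\<^sup>2) * (norm (z - v))\<^sup>2)"
    by (simp add: real_sqrt_mult)
  also have "\<dots> \<le> sqrt ((d\<^sup>2 - sv)\<^sup>2)" using key by (rule real_sqrt_le_mono)
  also have "\<dots> = d\<^sup>2 - sv" using pos by simp
  finally show ?thesis using ip unfolding d_def w_def by simp
qed

lemma sum_if_const_eq_card:
  "(\<Sum>j\<in>A. if P j then x else y) = real (card {j\<in>A. P j}) * x + real (card {j\<in>A. \<not> P j}) * y"
  if "finite A"
proof -
  have "{j\<in>A. P j} = A \<inter> {j. P j}" "{j\<in>A. \<not> P j} = A \<inter> - {j. P j}" by auto
  then show ?thesis using that by (simp add: sum.If_cases)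
qed

lemma card_filter_add_card_filter_not:
  "finite A \<Longrightarrow> card {j\<in>A. P j} + card {j\<in>A. \<not> P j} = card A"
  by (subst card_Un_disjoint[symmetric]) (auto intro: arg_cong[where f = card])

text \<open>Moving a real median \<open>y < c\<close> up to \<open>c\<close> decreases the distance to every point \<open>\<ge> c\<close> by
  \<open>c - y\<close> and increases the others by at most as much.\<close>
lemma geometric_median_real_ge:
  fixes T :: "nat \<Rightarrow> real"
  assumes med: "is_geometric_median k T y"
    and few: "2 * card {j\<in>{..<k}. T j < c} < k"
  shows "c \<le> y"
proof (rule ccontr)
  assume "\<not> c \<le> y"
  then have yc: "y < c" by simp
  define b where "b = card {j\<in>{..<k}. T j < c}"
  define g where "g = card {j\<in>{..<k}. \<not> T j < c}"
  have gb: "g + b = k" unfolding g_def b_def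
    using card_filter_add_card_filter_not[of "{..<k}" "\<lambda>j. T j < c"] by simp
  have "(\<Sum>j<k. norm (c - T j)) \<le> (\<Sum>j<k. norm (y - T j) + (if T j < c then c - y else y - c))"
    by (intro sum_mono) (use yc in auto)
  also have "\<dots> = (\<Sum>j<k. norm (y - T j)) + (real b * (c - y) + real g * (y - c))"
    unfolding sum.distrib sum_if_const_eq_card[OF finite_lessThan] g_def b_def by simp
  also have "\<dots> < (\<Sum>j<k. norm (y - T j))"
  proof -
    have "real b < real g" using few gb unfolding b_def g_def by linarith
    then have "real b * (c - y) < real g * (c - y)" using yc by (intro mult_strict_right_mono) auto
    then show ?thesis by (simp add: algebra_simps)
  qed
  finally show False using med unfolding is_geometric_median_def by (meson not_le)
qed

lemma norm_step_toward_le: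
  fixes z v \<mu> :: "'a::real_inner"
  assumes near: "norm (v - \<mu>) \<le> r" and far: "r < norm (\<mu> - z)" and t: "0 \<le> t"
  shows "norm (z + t *\<^sub>R (\<mu> - z) - v) \<le> norm (z - v) - t * sqrt ((norm (\<mu> - z))\<^sup>2 - r\<^sup>2)
    + t\<^sup>2 * ((norm (\<mu> - z))\<^sup>2 / (2 * (norm (\<mu> - z) - r)))"
proof -
  define a where "a = z - v"
  define d where "d = norm (\<mu> - z)"
  have "d \<le> norm (\<mu> - v) + norm (v - z)"
    unfolding d_def using norm_triangle_ineq[of "\<mu> - v" "v - z"] by simp
  then have ad: "d - r \<le> norm a" unfolding a_def using near by (simp add: norm_minus_commute)
  then have a0: "0 < norm a" using far unfolding d_def by linarith
  have "norm (a + t *\<^sub>R (\<mu> - z))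
      \<le> norm a + t * (a \<bullet> (\<mu> - z)) / norm a + t\<^sup>2 * d\<^sup>2 / (2 * norm a)"
    using norm_add_scaleR_le_quadratic[of a t "\<mu> - z"] a0 t unfolding d_def by auto
  also have "t * (a \<bullet> (\<mu> - z)) / norm a \<le> - t * sqrt (d\<^sup>2 - r\<^sup>2)"
  proof -
    have "a \<bullet> (\<mu> - z) / norm a \<le> - sqrt (d\<^sup>2 - r\<^sup>2)"
      using inner_le_neg_sqrt_mul_norm[OF near far] a0 unfolding a_def d_def by (simp add: divide_le_eq)
    from mult_left_mono[OF this t] show ?thesis by simp
  qed
  also have "t\<^sup>2 * d\<^sup>2 / (2 * norm a) \<le> t\<^sup>2 * (d\<^sup>2 / (2 * (d - r)))"
  proof -
    have "d\<^sup>2 / (2 * norm a) \<le> d\<^sup>2 / (2 * (d - r))"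
      using ad far a0 unfolding d_def by (intro divide_left_mono) auto
    then show ?thesis by (metis mult_left_mono times_divide_eq_right zero_le_power2)
  qed
  finally show ?thesis unfolding a_def d_def by (simp add: algebra_simps)
qed

lemma minsker_rate_lt:
  fixes b g C r d :: real
  assumes cnt: "C\<^sup>2 * b\<^sup>2 \<le> (C\<^sup>2 - 1) * g\<^sup>2" and g: "0 < g" and C: "1 < C" and r: "0 \<le> r"
    and d: "C * r < d"
  shows "b * d < g * sqrt (d\<^sup>2 - r\<^sup>2)"
proof -
  have "(C * r)\<^sup>2 < d\<^sup>2" using d C r by (intro power_strict_mono) auto
  then have "0 < g\<^sup>2 * (d\<^sup>2 - C\<^sup>2 * r\<^sup>2)" using g by (simp add: power_mult_distrib)
  also have "\<dots> \<le> C\<^sup>2 * (g\<^sup>2 * (d\<^sup>2 - r\<^sup>2) - b\<^sup>2 * d\<^sup>2)"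
    using mult_right_mono[OF cnt, of "d\<^sup>2"] by (simp add: algebra_simps)
  finally have "b\<^sup>2 * d\<^sup>2 < g\<^sup>2 * (d\<^sup>2 - r\<^sup>2)" using C by (simp add: zero_less_mult_iff)
  moreover have "r\<^sup>2 \<le> d\<^sup>2" using d C r by (smt (verit) mult_le_cancel_right1 power_mono)
  ultimately have "(b * d)\<^sup>2 < (g * sqrt (d\<^sup>2 - r\<^sup>2))\<^sup>2" by (simp add: power_mult_distrib)
  moreover have "0 \<le> g * sqrt (d\<^sup>2 - r\<^sup>2)" using g \<open>r\<^sup>2 \<le> d\<^sup>2\<close> by simp
  ultimately show ?thesis by (rule power_less_imp_less_base)
qed

text \<open>If \<open>d = \<parallel>z - \<mu>\<parallel>\<close> exceeded \<open>C r\<close>, moving \<open>z\<close> by \<open>t (\<mu> - z)\<close> would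
  shorten the distance to each of the \<open>g\<close> points near \<open>\<mu>\<close> by about \<open>t sqrt (d\<^sup>2 - r\<^sup>2)\<close> and
  lengthen the distance to each of the \<open>b\<close> far points by at most \<open>t d\<close>; by the counting hypothesis
  the net first-order change is negative, contradicting minimality.\<close>
lemma geometric_median_dist_le:
  fixes v :: "nat \<Rightarrow> 'a::real_inner"
  assumes med: "is_geometric_median k v z"
    and r0: "0 \<le> r" and C1: "1 < C"
    and cnt: "C\<^sup>2 * (real (card {j\<in>{..<k}. r < norm (v j - \<mu>)}))\<^sup>2
               \<le> (C\<^sup>2 - 1) * (real (card {j\<in>{..<k}. norm (v j - \<mu>) \<le> r}))\<^sup>2"
    and gpos: "card {j\<in>{..<k}. norm (v j - \<mu>) \<le> r} > 0"
  shows "norm (z - \<mu>) \<le> C * r"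
proof (rule ccontr)
  assume "\<not> norm (z - \<mu>) \<le> C * r"
  define d where "d = norm (\<mu> - z)"
  have dC: "C * r < d" using \<open>\<not> _\<close> unfolding d_def by (simp add: norm_minus_commute)
  have "r \<le> C * r" using mult_right_mono[of 1 C r] C1 r0 by simp
  then have dr: "r < d" using dC by simp
  define b where "b = card {j\<in>{..<k}. r < norm (v j - \<mu>)}"
  define g where "g = card {j\<in>{..<k}. norm (v j - \<mu>) \<le> r}"
  define D where "D = real g * sqrt (d\<^sup>2 - r\<^sup>2) - real b * d"
  define Q where "Q = d\<^sup>2 / (2 * (d - r))"
  have g0: "0 < real g" using gpos unfolding g_def by simp
  have D0: "0 < D" using minsker_rate_lt[OF cnt[folded b_def g_def] g0 C1 r0 dC] unfolding D_def by simp
  have Q0: "0 < Q" unfolding Q_def using dr r0 by simp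
  define t where "t = min 1 (D / (2 * real g * Q))"
  have t0: "0 < t" unfolding t_def using D0 Q0 g0 by simp
  have "t * (real g * Q) \<le> D / (2 * real g * Q) * (real g * Q)"
    unfolding t_def using g0 Q0 by (intro mult_right_mono) auto
  then have tQ: "t * (t * (real g * Q)) \<le> t * (D / 2)"
    using g0 Q0 t0 by (intro mult_left_mono) auto
  have step: "norm (z + t *\<^sub>R (\<mu> - z) - v j) \<le> norm (z - v j)
     + (if norm (v j - \<mu>) \<le> r then - t * sqrt (d\<^sup>2 - r\<^sup>2) + t\<^sup>2 * Q else t * d)" for j
  proof (cases "norm (v j - \<mu>) \<le> r")
    case True
    then show ?thesis using norm_step_toward_le[OF True, of z t] dr t0 unfolding d_def Q_def by simp
  next
    case False
    have "norm (z + t *\<^sub>R (\<mu> - z) - v j) \<le> norm (z - v j) + norm (t *\<^sub>R (\<mu> - z))"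
      using norm_triangle_ineq[of "z - v j" "t *\<^sub>R (\<mu> - z)"] by (simp add: algebra_simps)
    then show ?thesis using False t0 unfolding d_def by simp
  qed
  have "(\<Sum>j<k. norm (z + t *\<^sub>R (\<mu> - z) - v j))
      \<le> (\<Sum>j<k. norm (z - v j) + (if norm (v j - \<mu>) \<le> r then - t * sqrt (d\<^sup>2 - r\<^sup>2) + t\<^sup>2 * Q else t * d))"
    using step by (intro sum_mono) auto
  also have "\<dots> = (\<Sum>j<k. norm (z - v j)) - t * D + t * (t * (real g * Q))"
    unfolding sum.distrib sum_if_const_eq_card[OF finite_lessThan] g_def b_def D_def
    by (simp add: not_le algebra_simps power2_eq_square)
  also have "\<dots> < (\<Sum>j<k. norm (z - v j))" using tQ t0 D0 by (simp add: mult_pos_pos)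
  finally show False using med unfolding is_geometric_median_def by (meson not_le)
qed

lemma geometric_median_dist_le_13_10:
  fixes v :: "nat \<Rightarrow> 'a::real_inner"
  assumes med: "is_geometric_median k v z" and r0: "0 \<le> r"
    and few: "18 * card {j\<in>{..<k}. r < norm (v j - \<mu>)} < 7 * k"
  shows "norm (z - \<mu>) \<le> 13/10 * r"
proof (rule geometric_median_dist_le[OF med r0])
  define b where "b = card {j\<in>{..<k}. r < norm (v j - \<mu>)}"
  define g where "g = card {j\<in>{..<k}. norm (v j - \<mu>) \<le> r}"
  have "g + b = k" unfolding g_def b_def
    using card_filter_add_card_filter_not[of "{..<k}" "\<lambda>j. norm (v j - \<mu>) \<le> r"] by (simp add: not_le)
  then have bg: "11 * b < 7 * g" using few unfolding b_def by linarith
  then have "(11 * real b)\<^sup>2 \<le> (7 * real g)\<^sup>2" by (intro power_mono) auto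
  then have "121 * (real b)\<^sup>2 \<le> 49 * (real g)\<^sup>2" by (simp add: power_mult_distrib)
  then show "(13/10)\<^sup>2 * (real b)\<^sup>2 \<le> ((13/10)\<^sup>2 - 1) * (real g)\<^sup>2"
    by (simp add: power_divide) (use zero_le_power2[of "real g"] in linarith)
  show "0 < g" using bg by simp
qed simp

section \<open>Block statistics\<close>

definition block_mean :: "nat set \<Rightarrow> (nat \<Rightarrow> 'a::real_vector) \<Rightarrow> 'a" where
  "block_mean S x = (1 / real (card S)) *\<^sub>R (\<Sum>i\<in>S. x i)"

definition block_var :: "nat set \<Rightarrow> (nat \<Rightarrow> 'a::real_normed_vector) \<Rightarrow> real" where
  "block_var S x = (1 / real (card S)) * (\<Sum>i\<in>S. (norm (x i - block_mean S x))\<^sup>2)"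

text \<open>By Chebyshev's inequality the two conditions fail with probability at most \<open>6/100\<close> and
  \<open>4/100\<close> respectively.\<close>
definition good_block :: "real \<Rightarrow> 'a::real_normed_vector \<Rightarrow> nat set \<Rightarrow> (nat \<Rightarrow> 'a) \<Rightarrow> bool" where
  "good_block s \<mu> S x \<longleftrightarrow>
     (norm (block_mean S x - \<mu>))\<^sup>2 < s / (6/100 * real (card S)) \<and>
     \<bar>(1 / real (card S)) * (\<Sum>i\<in>S. (norm (x i - \<mu>))\<^sup>2) - s\<bar> < 33/100 * s"

lemma block_mean_minus:
  assumes "finite S" "S \<noteq> {}"
  shows "block_mean S x - \<mu> = block_mean S (\<lambda>i. x i - \<mu>)"
  using assms by (simp add: block_mean_def sum_subtractf scaleR_diff_right sum_constant_scaleR)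

lemma block_var_eq:
  fixes x :: "nat \<Rightarrow> 'a::real_inner"
  assumes fin: "finite S" and ne: "S \<noteq> {}"
  shows "block_var S x
    = (1 / real (card S)) * (\<Sum>i\<in>S. (norm (x i - \<mu>))\<^sup>2) - (norm (block_mean S x - \<mu>))\<^sup>2"
proof -
  define m where "m = real (card S)"
  have m0: "0 < m" unfolding m_def using fin ne by (simp add: card_gt_0_iff)
  define e where "e = block_mean S x - \<mu>"
  have sum_dev: "(\<Sum>i\<in>S. x i - \<mu>) = m *\<^sub>R e"
    using block_mean_minus[OF fin ne, of x \<mu>] m0 unfolding e_def block_mean_def m_def by simp
  have "(norm (x i - block_mean S x))\<^sup>2 = (norm (x i - \<mu>))\<^sup>2 - 2 * ((x i - \<mu>) \<bullet> e) + (norm e)\<^sup>2" for i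
  proof -
    have "x i - block_mean S x = (x i - \<mu>) - e" unfolding e_def by simp
    then show ?thesis using dot_norm_neg[of "x i - \<mu>" e] by (simp only:) argo
  qed
  then have "(\<Sum>i\<in>S. (norm (x i - block_mean S x))\<^sup>2)
      = (\<Sum>i\<in>S. (norm (x i - \<mu>))\<^sup>2) - 2 * (\<Sum>i\<in>S. (x i - \<mu>) \<bullet> e) + m * (norm e)\<^sup>2"
    unfolding m_def by (simp add: sum.distrib sum_subtractf sum_distrib_left)
  also have "(\<Sum>i\<in>S. (x i - \<mu>) \<bullet> e) = m * (norm e)\<^sup>2"
    unfolding inner_sum_left[symmetric] sum_dev by (simp add: power2_norm_eq_inner)
  finally show ?thesis using m0 unfolding block_var_def e_def m_def by (simp add: field_simps)
qed

lemma good_block_bounds: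
  fixes x :: "nat \<Rightarrow> 'a::real_inner"
  assumes "finite S" "S \<noteq> {}" "good_block s \<mu> S x"
  shows "norm (block_mean S x - \<mu>) \<le> sqrt (s / (6/100 * real (card S)))"
    and "(67/100 - 1 / (6/100 * real (card S))) * s \<le> block_var S x"
proof -
  have mean: "(norm (block_mean S x - \<mu>))\<^sup>2 < s / (6/100 * real (card S))"
    and "\<bar>(1 / real (card S)) * (\<Sum>i\<in>S. (norm (x i - \<mu>))\<^sup>2) - s\<bar> < 33/100 * s"
    using assms(3) unfolding good_block_def by auto
  then have dev: "67/100 * s < (1 / real (card S)) * (\<Sum>i\<in>S. (norm (x i - \<mu>))\<^sup>2)"
    by linarith
  show "norm (block_mean S x - \<mu>) \<le> sqrt (s / (6/100 * real (card S)))"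
    using mean by (intro real_le_rsqrt) simp
  show "(67/100 - 1 / (6/100 * real (card S))) * s \<le> block_var S x"
    using mean dev unfolding block_var_eq[OF assms(1,2), of x \<mu>] by (simp add: algebra_simps)
qed

lemma median_of_blocks_bounds:
  fixes x :: "nat \<Rightarrow> 'a::real_inner"
  assumes card: "\<And>j. j < k \<Longrightarrow> card (G j) = m" and m0: "0 < m" and s0: "0 < s"
    and few_bad: "18 * card {j\<in>{..<k}. \<not> good_block s \<mu> (G j) x} < 7 * k"
    and med_mean: "is_geometric_median k (\<lambda>j. block_mean (G j) x) z"
    and med_var: "is_geometric_median k (\<lambda>j. block_var (G j) x) T"
  shows "norm (z - \<mu>) \<le> 13/10 * sqrt (s / (6/100 * real m))"
    and "(67/100 - 1 / (6/100 * real m)) * s \<le> T"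
proof -
  have G: "finite (G j)" "G j \<noteq> {}" if "j < k" for j
    using card[OF that] m0 by (auto intro: card_ge_0_finite)
  let ?bad = "{j\<in>{..<k}. \<not> good_block s \<mu> (G j) x}"
  have far_bad: "\<not> good_block s \<mu> (G j) x"
    if "j < k" "sqrt (s / (6/100 * real m)) < norm (block_mean (G j) x - \<mu>)" for j
  proof
    assume "good_block s \<mu> (G j) x"
    from good_block_bounds(1)[OF G[OF that(1)] this] show False
      using card[OF that(1)] that(2) by simp
  qed
  have "card {j\<in>{..<k}. sqrt (s / (6/100 * real m)) < norm (block_mean (G j) x - \<mu>)} \<le> card ?bad"
    by (rule card_mono) (simp, use far_bad in blast)
  then show "norm (z - \<mu>) \<le> 13/10 * sqrt (s / (6/100 * real m))"
    using few_bad s0 by (intro geometric_median_dist_le_13_10[OF med_mean]) auto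
  have low_bad: "\<not> good_block s \<mu> (G j) x"
    if "j < k" "block_var (G j) x < (67/100 - 1 / (6/100 * real m)) * s" for j
  proof
    assume "good_block s \<mu> (G j) x"
    from good_block_bounds(2)[OF G[OF that(1)] this] show False
      using card[OF that(1)] that(2) by simp
  qed
  have "card {j\<in>{..<k}. block_var (G j) x < (67/100 - 1 / (6/100 * real m)) * s} \<le> card ?bad"
    by (rule card_mono) (simp, use low_bad in blast)
  then show "(67/100 - 1 / (6/100 * real m)) * s \<le> T"
    using few_bad by (intro geometric_median_real_ge[OF med_var]) auto
qed

section \<open>Independence and moments\<close>

lemma (in prob_space) indep_vars_imp_indep_var:
  assumes ind: "indep_vars (\<lambda>_. borel) X I" and "i \<in> I" "l \<in> I" "i \<noteq> l"
  shows "indep_var borel (X i) borel (X l)"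
proof -
  have "indep_var (PiM {i} (\<lambda>_. borel)) (\<lambda>\<omega>. restrict (\<lambda>i. X i \<omega>) {i})
                  (PiM {l} (\<lambda>_. borel)) (\<lambda>\<omega>. restrict (\<lambda>i. X i \<omega>) {l})"
    by (rule indep_var_restrict[OF ind]) (use assms in auto)
  then have "indep_var borel ((\<lambda>f. f i) \<circ> (\<lambda>\<omega>. restrict (\<lambda>i. X i \<omega>) {i}))
                       borel ((\<lambda>f. f l) \<circ> (\<lambda>\<omega>. restrict (\<lambda>i. X i \<omega>) {l}))"
    by (rule indep_var_compose) (auto intro: measurable_component_singleton)
  then show ?thesis by (simp add: comp_def)
qed

lemma (in prob_space) indep_vars_restrict_blocks:
  fixes X :: "'i \<Rightarrow> 'a \<Rightarrow> 'c::topological_space"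
  assumes ind: "indep_vars (\<lambda>_. borel) X I" and sub: "\<And>j. j \<in> J \<Longrightarrow> G j \<subseteq> I"
    and disj: "disjoint_family_on G J"
    and \<Phi>: "\<And>j. j \<in> J \<Longrightarrow> \<Phi> j \<in> borel_measurable (PiM (G j) (\<lambda>_. borel))"
  shows "indep_vars (\<lambda>_. borel) (\<lambda>j \<omega>. \<Phi> j (restrict (\<lambda>i. X i \<omega>) (G j))) J"
proof -
  have "indep_vars (\<lambda>j. PiM (G j) (\<lambda>_. borel)) (\<lambda>j \<omega>. restrict (\<lambda>i. X i \<omega>) (G j)) J"
    by (rule indep_vars_restrict[OF ind _ disj]) (use sub in auto)
  then show ?thesis by (rule indep_vars_compose2) (use \<Phi> in auto)
qed

lemma (in prob_space) distr_eq_integral_comp: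
  fixes f :: "'d::topological_space \<Rightarrow> 'e::{banach, second_countable_topology}"
  assumes distr: "distr M borel Y = distr M borel Z"
    and [measurable]: "Y \<in> borel_measurable M" "Z \<in> borel_measurable M" "f \<in> borel_measurable borel"
    and int: "integrable M (\<lambda>\<omega>. f (Z \<omega>))"
  shows "integrable M (\<lambda>\<omega>. f (Y \<omega>))"
    and "expectation (\<lambda>\<omega>. f (Y \<omega>)) = expectation (\<lambda>\<omega>. f (Z \<omega>))"
proof -
  have "integrable (distr M borel Z) f" using int by (subst integrable_distr_eq) auto
  then show "integrable M (\<lambda>\<omega>. f (Y \<omega>))" unfolding distr[symmetric] by (subst (asm) integrable_distr_eq) auto
  have "expectation (\<lambda>\<omega>. f (Y \<omega>)) = integral\<^sup>L (distr M borel Y) f" by (subst integral_distr) auto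
  also have "\<dots> = expectation (\<lambda>\<omega>. f (Z \<omega>))" unfolding distr by (subst integral_distr) auto
  finally show "expectation (\<lambda>\<omega>. f (Y \<omega>)) = expectation (\<lambda>\<omega>. f (Z \<omega>))" .
qed

lemma (in prob_space) square_integrable_variance:
  fixes W :: "'a \<Rightarrow> real"
  assumes "W \<in> borel_measurable M" "integrable M (\<lambda>\<omega>. (W \<omega>)\<^sup>2)"
  shows "integrable M W" and "integrable M (\<lambda>\<omega>. (W \<omega> - expectation W)\<^sup>2)"
    and "expectation (\<lambda>\<omega>. (W \<omega> - expectation W)\<^sup>2)
      = expectation (\<lambda>\<omega>. (W \<omega>)\<^sup>2) - (expectation W)\<^sup>2"
    and "(expectation W)\<^sup>2 \<le> expectation (\<lambda>\<omega>. (W \<omega>)\<^sup>2)"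
proof -
  show int: "integrable M W" by (rule square_integrable_imp_integrable[OF assms])
  show "integrable M (\<lambda>\<omega>. (W \<omega> - expectation W)\<^sup>2)"
    using int assms(2) by (simp add: power2_diff)
  show "expectation (\<lambda>\<omega>. (W \<omega> - expectation W)\<^sup>2)
      = expectation (\<lambda>\<omega>. (W \<omega>)\<^sup>2) - (expectation W)\<^sup>2"
    using variance_eq[OF int assms(2)] .
  then show "(expectation W)\<^sup>2 \<le> expectation (\<lambda>\<omega>. (W \<omega>)\<^sup>2)"
    using variance_positive[of W] by simp
qed

lemma (in prob_space) integrable_inner:
  fixes U V :: "'a \<Rightarrow> 'c::{real_inner, banach, second_countable_topology}"
  assumes [measurable]: "U \<in> borel_measurable M" "V \<in> borel_measurable M"
    and U2: "integrable M (\<lambda>\<omega>. (norm (U \<omega>))\<^sup>2)" and V2: "integrable M (\<lambda>\<omega>. (norm (V \<omega>))\<^sup>2)"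
  shows "integrable M (\<lambda>\<omega>. U \<omega> \<bullet> V \<omega>)"
proof (rule Bochner_Integration.integrable_bound[OF Bochner_Integration.integrable_add[OF U2 V2]])
  show "(\<lambda>\<omega>. U \<omega> \<bullet> V \<omega>) \<in> borel_measurable M" by measurable
  have "norm (U \<omega> \<bullet> V \<omega>) \<le> (norm (U \<omega>))\<^sup>2 + (norm (V \<omega>))\<^sup>2" for \<omega>
  proof -
    have "norm (U \<omega> \<bullet> V \<omega>) \<le> norm (U \<omega>) * norm (V \<omega>)" using Cauchy_Schwarz_ineq2 by simp
    also have "\<dots> \<le> (norm (U \<omega>))\<^sup>2 + (norm (V \<omega>))\<^sup>2"
      using sum_squares_bound[of "norm (U \<omega>)" "norm (V \<omega>)"]
        mult_nonneg_nonneg[OF norm_ge_zero norm_ge_zero, of "U \<omega>" "V \<omega>"] by linarith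
    finally show ?thesis .
  qed
  then show "AE \<omega> in M. norm (U \<omega> \<bullet> V \<omega>) \<le> norm ((norm (U \<omega>))\<^sup>2 + (norm (V \<omega>))\<^sup>2)" by simp
qed

lemma (in prob_space) indep_var_expectation_inner_eq_0:
  fixes U V :: "'a \<Rightarrow> 'c::{real_inner, banach, second_countable_topology}"
  assumes ind: "indep_var borel U borel V"
    and "integrable M V" "expectation V = 0"
    and "integrable M (\<lambda>\<omega>. (norm (U \<omega>))\<^sup>2)" "integrable M (\<lambda>\<omega>. (norm (V \<omega>))\<^sup>2)"
  shows "expectation (\<lambda>\<omega>. U \<omega> \<bullet> V \<omega>) = 0"
proof -
  have [measurable]: "U \<in> borel_measurable M" "V \<in> borel_measurable M"
    using ind by (auto dest: indep_var_rv1 indep_var_rv2)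
  define P where "P = distr M borel U"
  define Q where "Q = distr M borel V"
  interpret P: prob_space P unfolding P_def by (rule prob_space_distr) measurable
  interpret Q: prob_space Q unfolding Q_def by (rule prob_space_distr) measurable
  interpret PQ: pair_sigma_finite P Q ..
  have joint: "distr M (borel \<Otimes>\<^sub>M borel) (\<lambda>\<omega>. (U \<omega>, V \<omega>)) = P \<Otimes>\<^sub>M Q"
    using ind unfolding indep_var_distribution_eq P_def Q_def by simp
  have "integrable M (\<lambda>\<omega>. U \<omega> \<bullet> V \<omega>)" by (rule integrable_inner) (use assms in auto)
  then have "integrable (P \<Otimes>\<^sub>M Q) (\<lambda>(x, y). x \<bullet> y)"
    unfolding joint[symmetric] by (subst integrable_distr_eq) (auto simp: case_prod_beta')
  then have "integral\<^sup>L (P \<Otimes>\<^sub>M Q) (\<lambda>(x, y). x \<bullet> y) = (\<integral>x. (\<integral>y. x \<bullet> y \<partial>Q) \<partial>P)"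
    by (rule PQ.integral_fst[symmetric])
  also have "\<dots> = (\<integral>x. x \<bullet> integral\<^sup>L Q (\<lambda>y. y) \<partial>P)"
  proof -
    have "integrable Q (\<lambda>y. y)" unfolding Q_def using assms by (subst integrable_distr_eq) auto
    then show ?thesis by simp
  qed
  also have "integral\<^sup>L Q (\<lambda>y. y) = 0" unfolding Q_def using assms by (subst integral_distr) auto
  finally have "integral\<^sup>L (P \<Otimes>\<^sub>M Q) (\<lambda>(x, y). x \<bullet> y) = 0" by simp
  moreover have "expectation (\<lambda>\<omega>. U \<omega> \<bullet> V \<omega>) = integral\<^sup>L (P \<Otimes>\<^sub>M Q) (\<lambda>(x, y). x \<bullet> y)"
    unfolding joint[symmetric] by (subst integral_distr) (auto simp: case_prod_beta')
  ultimately show ?thesis by simp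
qed

lemma (in prob_space) expectation_norm_sum_sq:
  fixes U :: "nat \<Rightarrow> 'a \<Rightarrow> 'c::{real_inner, banach, second_countable_topology}"
  assumes fin: "finite S"
    and int: "\<And>i. i \<in> S \<Longrightarrow> integrable M (U i)"
    and int2: "\<And>i. i \<in> S \<Longrightarrow> integrable M (\<lambda>\<omega>. (norm (U i \<omega>))\<^sup>2)"
    and mean0: "\<And>i. i \<in> S \<Longrightarrow> expectation (U i) = 0"
    and sq: "\<And>i. i \<in> S \<Longrightarrow> expectation (\<lambda>\<omega>. (norm (U i \<omega>))\<^sup>2) = \<sigma>2"
    and ind: "\<And>i l. i \<in> S \<Longrightarrow> l \<in> S \<Longrightarrow> i \<noteq> l \<Longrightarrow> indep_var borel (U i) borel (U l)"
  shows "integrable M (\<lambda>\<omega>. (norm (\<Sum>i\<in>S. U i \<omega>))\<^sup>2)"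
    and "expectation (\<lambda>\<omega>. (norm (\<Sum>i\<in>S. U i \<omega>))\<^sup>2) = real (card S) * \<sigma>2"
proof -
  have expand: "(norm (\<Sum>i\<in>S. U i \<omega>))\<^sup>2 = (\<Sum>i\<in>S. \<Sum>l\<in>S. U i \<omega> \<bullet> U l \<omega>)" for \<omega>
    unfolding power2_norm_eq_inner inner_sum_left by (simp add: inner_sum_right)
  have int_il: "integrable M (\<lambda>\<omega>. U i \<omega> \<bullet> U l \<omega>)" if "i \<in> S" "l \<in> S" for i l
    using that int int2 by (intro integrable_inner) auto
  have E_il: "expectation (\<lambda>\<omega>. U i \<omega> \<bullet> U l \<omega>) = (if i = l then \<sigma>2 else 0)"
    if "i \<in> S" "l \<in> S" for i l
  proof (cases "i = l")
    case True
    then show ?thesis using sq[OF that(1)] by (simp add: power2_norm_eq_inner)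
  next
    case False
    then show ?thesis
      using that int int2 mean0 by (simp add: indep_var_expectation_inner_eq_0[OF ind[OF that False]])
  qed
  show "integrable M (\<lambda>\<omega>. (norm (\<Sum>i\<in>S. U i \<omega>))\<^sup>2)"
    unfolding expand using int_il by auto
  have "expectation (\<lambda>\<omega>. (norm (\<Sum>i\<in>S. U i \<omega>))\<^sup>2)
      = (\<Sum>i\<in>S. \<Sum>l\<in>S. expectation (\<lambda>\<omega>. U i \<omega> \<bullet> U l \<omega>))"
    unfolding expand using int_il by (simp add: Bochner_Integration.integral_sum)
  also have "\<dots> = (\<Sum>i\<in>S. \<Sum>l\<in>S. (if i = l then \<sigma>2 else 0))"
    using E_il by simp
  also have "\<dots> = real (card S) * \<sigma>2" using fin by simp
  finally show "expectation (\<lambda>\<omega>. (norm (\<Sum>i\<in>S. U i \<omega>))\<^sup>2) = real (card S) * \<sigma>2" .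
qed

lemma (in prob_space) prob_norm_block_mean_ge:
  fixes X :: "nat \<Rightarrow> 'a \<Rightarrow> 'c::topological_space"
    and f :: "'c \<Rightarrow> 'd::{real_inner, banach, second_countable_topology}"
  assumes S: "finite S"
    and rv: "\<And>i. i \<in> S \<Longrightarrow> X i \<in> borel_measurable M"
    and ind: "\<And>i l. i \<in> S \<Longrightarrow> l \<in> S \<Longrightarrow> i \<noteq> l \<Longrightarrow> indep_var borel (X i) borel (X l)"
    and ident: "\<And>i. i \<in> S \<Longrightarrow> distr M borel (X i) = distr M borel X0"
    and X0: "X0 \<in> borel_measurable M" and f: "f \<in> borel_measurable borel"
    and int: "integrable M (\<lambda>\<omega>. f (X0 \<omega>))" and int2: "integrable M (\<lambda>\<omega>. (norm (f (X0 \<omega>)))\<^sup>2)"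
    and mean0: "expectation (\<lambda>\<omega>. f (X0 \<omega>)) = 0"
    and a: "0 < a"
  shows "prob {\<omega>\<in>space M. a \<le> (norm (block_mean S (\<lambda>i. f (X i \<omega>))))\<^sup>2}
    \<le> expectation (\<lambda>\<omega>. (norm (f (X0 \<omega>)))\<^sup>2) / (real (card S) * a)"
proof -
  have f2: "(\<lambda>x. (norm (f x))\<^sup>2) \<in> borel_measurable borel"
    using f by measurable
  note transfer = distr_eq_integral_comp[OF ident rv X0]
  have "integrable M (\<lambda>\<omega>. (norm (\<Sum>i\<in>S. f (X i \<omega>)))\<^sup>2)"
    and "expectation (\<lambda>\<omega>. (norm (\<Sum>i\<in>S. f (X i \<omega>)))\<^sup>2)
      = real (card S) * expectation (\<lambda>\<omega>. (norm (f (X0 \<omega>)))\<^sup>2)"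
    using expectation_norm_sum_sq[OF S, of "\<lambda>i \<omega>. f (X i \<omega>)"]
      transfer[OF _ _ f int] transfer[OF _ _ f2 int2] mean0
      indep_var_compose[OF ind, of _ _ f borel f borel] f
    by (auto simp: comp_def)
  note sum_sq = this
  have mean_sq: "(norm (block_mean S (\<lambda>i. f (X i \<omega>))))\<^sup>2
      = (1 / real (card S))\<^sup>2 * (norm (\<Sum>i\<in>S. f (X i \<omega>)))\<^sup>2" for \<omega>
    by (simp add: block_mean_def power_divide)
  have "prob {\<omega>\<in>space M. a \<le> (norm (block_mean S (\<lambda>i. f (X i \<omega>))))\<^sup>2}
      \<le> expectation (\<lambda>\<omega>. (1 / real (card S))\<^sup>2 * (norm (\<Sum>i\<in>S. f (X i \<omega>)))\<^sup>2) / a"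
    unfolding mean_sq using sum_sq(1) a
    by (intro integral_Markov_inequality_measure[where A = "space M"]) auto
  also have "\<dots> = expectation (\<lambda>\<omega>. (norm (f (X0 \<omega>)))\<^sup>2) / (real (card S) * a)"
    using sum_sq(2) by (simp add: power2_eq_square)
  finally show ?thesis .
qed

lemma (in prob_space) prob_not_good_block_le:
  fixes X :: "nat \<Rightarrow> 'a \<Rightarrow> 'c::{real_inner, banach, second_countable_topology}"
  assumes S: "finite S" "S \<noteq> {}"
    and rv: "\<And>i. i \<in> S \<Longrightarrow> X i \<in> borel_measurable M"
    and ind: "\<And>i l. i \<in> S \<Longrightarrow> l \<in> S \<Longrightarrow> i \<noteq> l \<Longrightarrow> indep_var borel (X i) borel (X l)"
    and ident: "\<And>i. i \<in> S \<Longrightarrow> distr M borel (X i) = distr M borel X0"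
    and int1: "integrable M X0" and mean: "expectation X0 = \<mu>"
    and int4: "integrable M (\<lambda>\<omega>. norm (X0 \<omega> - \<mu>) ^ 4)"
    and s: "s = expectation (\<lambda>\<omega>. (norm (X0 \<omega> - \<mu>))\<^sup>2)" "0 < s"
    and kurt: "expectation (\<lambda>\<omega>. norm (X0 \<omega> - \<mu>) ^ 4) - s\<^sup>2 \<le> 1/25 * (33/100 * s)\<^sup>2 * real (card S)"
  shows "prob {\<omega>\<in>space M. \<not> good_block s \<mu> S (\<lambda>i. X i \<omega>)} \<le> 1/10"
proof -
  have X0[measurable]: "X0 \<in> borel_measurable M" using int1 by auto
  have m0: "0 < real (card S)" using S by (simp add: card_gt_0_iff)
  have "integrable M (\<lambda>\<omega>. ((norm (X0 \<omega> - \<mu>))\<^sup>2)\<^sup>2)" using int4 by (simp flip: power_mult)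
  note moments = square_integrable_variance[OF _ this, folded s(1)]
  have var: "integrable M (\<lambda>\<omega>. (norm (X0 \<omega> - \<mu>))\<^sup>2)"
    "integrable M (\<lambda>\<omega>. ((norm (X0 \<omega> - \<mu>))\<^sup>2 - s)\<^sup>2)"
    "expectation (\<lambda>\<omega>. ((norm (X0 \<omega> - \<mu>))\<^sup>2 - s)\<^sup>2) = expectation (\<lambda>\<omega>. norm (X0 \<omega> - \<mu>) ^ 4) - s\<^sup>2"
    using moments by (simp_all flip: power_mult)
  have [measurable]: "X i \<in> borel_measurable M" if "i \<in> S" for i using rv that .
  let ?A = "{\<omega>\<in>space M. s / (6/100 * real (card S)) \<le> (norm (block_mean S (\<lambda>i. X i \<omega> - \<mu>)))\<^sup>2}"
  let ?B = "{\<omega>\<in>space M. (33/100 * s)\<^sup>2 \<le> (norm (block_mean S (\<lambda>i. (norm (X i \<omega> - \<mu>))\<^sup>2 - s)))\<^sup>2}"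
  have A_ev: "?A \<in> events" unfolding block_mean_def by measurable
  have B_ev: "?B \<in> events" unfolding block_mean_def by measurable
  have f1: "(\<lambda>x. x - \<mu>) \<in> borel_measurable borel" by measurable
  have f2: "(\<lambda>x. (norm (x - \<mu>))\<^sup>2 - s) \<in> borel_measurable borel" by measurable
  have "prob ?A
      \<le> expectation (\<lambda>\<omega>. (norm (X0 \<omega> - \<mu>))\<^sup>2) / (real (card S) * (s / (6/100 * real (card S))))"
    by (rule prob_norm_block_mean_ge[OF S(1) rv ind ident X0 f1])
      (use int1 mean var s m0 in \<open>simp_all add: prob_space\<close>)
  also have "\<dots> = 6/100" using s m0 by simp
  finally have A: "prob ?A \<le> 6/100" .
  have "prob ?B
      \<le> expectation (\<lambda>\<omega>. (norm ((norm (X0 \<omega> - \<mu>))\<^sup>2 - s))\<^sup>2) / (real (card S) * (33/100 * s)\<^sup>2)"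
    by (rule prob_norm_block_mean_ge[OF S(1) rv ind ident X0 f2])
      (use var s in \<open>simp_all add: prob_space\<close>)
  also have "\<dots> = (expectation (\<lambda>\<omega>. norm (X0 \<omega> - \<mu>) ^ 4) - s\<^sup>2) / (real (card S) * (33/100 * s)\<^sup>2)"
    using var by simp
  also have "\<dots> \<le> 1/25" using kurt s m0 by (simp add: divide_le_eq mult.commute)
  finally have B: "prob ?B \<le> 1/25" .
  have "(1 / real (card S)) * (\<Sum>i\<in>S. (norm (X i \<omega> - \<mu>))\<^sup>2) - s
      = block_mean S (\<lambda>i. (norm (X i \<omega> - \<mu>))\<^sup>2 - s)" for \<omega>
    unfolding block_mean_minus[OF S, symmetric] by (simp add: block_mean_def)
  moreover have "33/100 * s \<le> \<bar>w\<bar> \<longleftrightarrow> (33/100 * s)\<^sup>2 \<le> w\<^sup>2" for w :: real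
    using s(2) by (simp add: abs_le_square_iff[symmetric])
  ultimately have "{\<omega>\<in>space M. \<not> good_block s \<mu> S (\<lambda>i. X i \<omega>)} = ?A \<union> ?B"
    unfolding good_block_def block_mean_minus[OF S] by (auto simp: not_less)
  moreover have "prob (?A \<union> ?B) \<le> prob ?A + prob ?B" using A_ev B_ev by (rule measure_Un_le)
  ultimately show ?thesis using A B by simp
qed

lemma (in prob_space) expectation_prod_powr_indicators_le:
  fixes Z :: "nat \<Rightarrow> 'a \<Rightarrow> real"
  assumes ind: "indep_vars (\<lambda>_. borel) Z {..<k}"
    and Z01: "\<And>j \<omega>. j < k \<Longrightarrow> \<omega> \<in> space M \<Longrightarrow> Z j \<omega> = 0 \<or> Z j \<omega> = 1"
    and EZ: "\<And>j. j < k \<Longrightarrow> expectation (Z j) \<le> p"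
    and t: "1 \<le> t"
  shows "integrable M (\<lambda>\<omega>. \<Prod>j<k. t powr Z j \<omega>)"
    and "expectation (\<lambda>\<omega>. \<Prod>j<k. t powr Z j \<omega>) \<le> (1 + (t - 1) * p) ^ k"
proof -
  have [measurable]: "Z j \<in> borel_measurable M" if "j < k" for j
    using ind that by (auto simp: indep_vars_def)
  have indY: "indep_vars (\<lambda>_. borel) (\<lambda>j \<omega>. t powr Z j \<omega>) {..<k}"
    by (rule indep_vars_compose2[OF ind]) measurable
  have Y_eq: "t powr Z j \<omega> = 1 + (t - 1) * Z j \<omega>" if "j < k" "\<omega> \<in> space M" for j \<omega>
    using Z01[OF that] t by auto
  have intZ: "integrable M (Z j)" if "j < k" for j
    by (rule integrable_const_bound[where B = 1]) (use that in \<open>auto intro!: AE_I2 dest: Z01[of j]\<close>)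
  have intY: "integrable M (\<lambda>\<omega>. t powr Z j \<omega>)" if "j < k" for j
  proof -
    have "integrable M (\<lambda>\<omega>. t powr Z j \<omega>) \<longleftrightarrow> integrable M (\<lambda>\<omega>. 1 + (t - 1) * Z j \<omega>)"
      using Y_eq[OF that] by (intro Bochner_Integration.integrable_cong) auto
    then show ?thesis using intZ[OF that] by simp
  qed
  have EY: "0 \<le> expectation (\<lambda>\<omega>. t powr Z j \<omega>) \<and> expectation (\<lambda>\<omega>. t powr Z j \<omega>) \<le> 1 + (t - 1) * p"
    if "j < k" for j
  proof
    show "0 \<le> expectation (\<lambda>\<omega>. t powr Z j \<omega>)" by (intro integral_nonneg_AE AE_I2) simp
    have "expectation (\<lambda>\<omega>. t powr Z j \<omega>) = expectation (\<lambda>\<omega>. 1 + (t - 1) * Z j \<omega>)"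
      using Y_eq[OF that] by (intro Bochner_Integration.integral_cong) auto
    also have "\<dots> = 1 + (t - 1) * expectation (Z j)" using intZ[OF that] by (simp add: prob_space)
    also have "\<dots> \<le> 1 + (t - 1) * p" using EZ[OF that] t by (simp add: mult_left_mono)
    finally show "expectation (\<lambda>\<omega>. t powr Z j \<omega>) \<le> 1 + (t - 1) * p" .
  qed
  show "integrable M (\<lambda>\<omega>. \<Prod>j<k. t powr Z j \<omega>)"
    by (rule indep_vars_integrable) (use indY intY in auto)
  have "expectation (\<lambda>\<omega>. \<Prod>j<k. t powr Z j \<omega>) = (\<Prod>j<k. expectation (\<lambda>\<omega>. t powr Z j \<omega>))"
    by (rule indep_vars_lebesgue_integral) (use indY intY in auto)
  also have "\<dots> \<le> (1 + (t - 1) * p) ^ k"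
    using prod_mono[of "{..<k}" "\<lambda>j. expectation (\<lambda>\<omega>. t powr Z j \<omega>)" "\<lambda>_. 1 + (t - 1) * p"] EY by simp
  finally show "expectation (\<lambda>\<omega>. \<Prod>j<k. t powr Z j \<omega>) \<le> (1 + (t - 1) * p) ^ k" .
qed

text \<open>The value of \<open>t\<close> minimises the Chernoff bound below.\<close>
lemma chernoff_bound_eq_exp_psi:
  fixes p a :: real
  assumes p: "0 < p" "p < a" "a < 1"
  defines "t \<equiv> a * (1 - p) / (p * (1 - a))"
  shows "(1 + (t - 1) * p) ^ k / t powr (a * real k) = exp (- real k * psi a p)"
proof -
  define q where "q = (1 - p) / (1 - a)"
  have q: "0 < q" "1 + (t - 1) * p = q" unfolding q_def t_def using p by (simp_all add: field_simps)
  have "0 < t" unfolding t_def using p by simp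
  have "ln t = ln (a / p) + ln q" unfolding t_def q_def using p by (simp add: ln_div ln_mult)
  moreover have "ln ((1 - a) / (1 - p)) = - ln q" unfolding q_def using p by (simp add: ln_div)
  ultimately have "- real k * psi a p = real k * ln q - a * real k * ln t"
    unfolding psi_def by (simp add: algebra_simps)
  moreover have "q ^ k = exp (real k * ln q)" using q by (simp add: exp_of_nat_mult)
  moreover have "t powr (a * real k) = exp (a * real k * ln t)" using \<open>0 < t\<close> by (simp add: powr_def)
  ultimately show ?thesis using q by (simp add: exp_diff)
qed

lemma (in prob_space) prob_sum_indicators_ge:
  fixes Z :: "nat \<Rightarrow> 'a \<Rightarrow> real"
  assumes ind: "indep_vars (\<lambda>_. borel) Z {..<k}"
    and Z01: "\<And>j \<omega>. j < k \<Longrightarrow> \<omega> \<in> space M \<Longrightarrow> Z j \<omega> = 0 \<or> Z j \<omega> = 1"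
    and EZ: "\<And>j. j < k \<Longrightarrow> expectation (Z j) \<le> p"
    and p: "0 < p" "p < a" "a < 1"
  shows "prob {\<omega>\<in>space M. a * real k \<le> (\<Sum>j<k. Z j \<omega>)} \<le> exp (- real k * psi a p)"
proof -
  define t where "t = a * (1 - p) / (p * (1 - a))"
  have "p * (1 - a) < a * (1 - p)" using p by (simp add: algebra_simps)
  then have t1: "1 < t" unfolding t_def using p by simp
  note E = expectation_prod_powr_indicators_le[OF ind Z01 EZ, of t]
  have [measurable]: "Z j \<in> borel_measurable M" if "j < k" for j
    using ind that by (auto simp: indep_vars_def)
  have prod_eq: "(\<Prod>j<k. t powr Z j \<omega>) = t powr (\<Sum>j<k. Z j \<omega>)" for \<omega>
    using t1 by (simp add: powr_sum)
  have "prob {\<omega>\<in>space M. a * real k \<le> (\<Sum>j<k. Z j \<omega>)}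
      \<le> prob {\<omega>\<in>space M. t powr (a * real k) \<le> (\<Prod>j<k. t powr Z j \<omega>)}"
  proof (rule finite_measure_mono)
    show "{\<omega>\<in>space M. t powr (a * real k) \<le> (\<Prod>j<k. t powr Z j \<omega>)} \<in> events" by measurable
  qed (use prod_eq t1 in \<open>auto intro: powr_mono\<close>)
  also have "\<dots> \<le> expectation (\<lambda>\<omega>. \<Prod>j<k. t powr Z j \<omega>) / t powr (a * real k)"
    using E(1) t1
    by (intro integral_Markov_inequality_measure[where A = "space M"]) (auto intro!: AE_I2 prod_nonneg)
  also have "\<dots> \<le> (1 + (t - 1) * p) ^ k / t powr (a * real k)"
    using E(2) t1 by (simp add: divide_right_mono)
  also have "\<dots> = exp (- real k * psi a p)"
    unfolding t_def by (rule chernoff_bound_eq_exp_psi[OF p])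
  finally show ?thesis .
qed

lemma good_block_restrict: "good_block s \<mu> S (restrict x S) = good_block s \<mu> S x"
  by (simp add: good_block_def block_mean_def)

lemma (in prob_space) prob_many_bad_blocks:
  fixes X :: "nat \<Rightarrow> 'a \<Rightarrow> 'c::{real_inner, banach, second_countable_topology}"
  assumes ind: "indep_vars (\<lambda>_. borel) X I"
    and ident: "\<And>i. i \<in> I \<Longrightarrow> distr M borel (X i) = distr M borel X0"
    and int1: "integrable M X0" and mean: "expectation X0 = \<mu>"
    and int4: "integrable M (\<lambda>\<omega>. norm (X0 \<omega> - \<mu>) ^ 4)"
    and s: "s = expectation (\<lambda>\<omega>. (norm (X0 \<omega> - \<mu>))\<^sup>2)" "0 < s"
    and G: "\<And>j. j < k \<Longrightarrow> G j \<subseteq> I" "\<And>j. j < k \<Longrightarrow> card (G j) = m" "disjoint_family_on G {..<k}"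
    and m0: "0 < m"
    and kurt: "expectation (\<lambda>\<omega>. norm (X0 \<omega> - \<mu>) ^ 4) - s\<^sup>2 \<le> 1/25 * (33/100 * s)\<^sup>2 * real m"
  defines "Bad \<equiv> {\<omega>\<in>space M. 7 * k \<le> 18 * card {j\<in>{..<k}. \<not> good_block s \<mu> (G j) (\<lambda>i. X i \<omega>)}}"
  shows "Bad \<in> events" and "prob Bad \<le> exp (- real k * psi (7/18) (1/10))"
proof -
  \<comment> \<open>The indicator of a bad block is written as a function of the restriction of the sample to
    the block, so that independence of disjoint blocks applies.\<close>
  define Z :: "nat \<Rightarrow> 'a \<Rightarrow> real"
    where "Z j \<omega> = of_bool (\<not> good_block s \<mu> (G j) (restrict (\<lambda>i. X i \<omega>) (G j)))" for j \<omega>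
  have Z_eq: "Z j \<omega> = of_bool (\<not> good_block s \<mu> (G j) (\<lambda>i. X i \<omega>))" for j \<omega>
    unfolding Z_def good_block_restrict ..
  have indZ: "indep_vars (\<lambda>_. borel) Z {..<k}"
    unfolding Z_def
  proof (rule indep_vars_restrict_blocks[OF ind])
    show "(\<lambda>f. of_bool (\<not> good_block s \<mu> (G j) f) :: real) \<in> borel_measurable (PiM (G j) (\<lambda>_. borel))"
      for j unfolding good_block_def block_mean_def by measurable
  qed (use G in auto)
  have [measurable]: "Z j \<in> borel_measurable M" if "j < k" for j
    using indZ that by (auto simp: indep_vars_def)
  have Bad_eq: "Bad = {\<omega>\<in>space M. 7/18 * real k \<le> (\<Sum>j<k. Z j \<omega>)}"
    unfolding Bad_def Z_eq by (auto simp: Int_def)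
  show "Bad \<in> events" unfolding Bad_eq by measurable
  have EZ: "expectation (Z j) \<le> 1/10" if j: "j < k" for j
  proof -
    have G_j: "finite (G j)" "G j \<noteq> {}" using G(2)[OF j] m0 by (auto intro: card_ge_0_finite)
    have "{\<omega>\<in>space M. \<not> good_block s \<mu> (G j) (\<lambda>i. X i \<omega>)} = {\<omega>\<in>space M. Z j \<omega> = 1}"
      unfolding Z_eq by auto
    also have "\<dots> \<in> events" using j by measurable
    finally have ev: "{\<omega>\<in>space M. \<not> good_block s \<mu> (G j) (\<lambda>i. X i \<omega>)} \<in> events" .
    have "expectation (Z j) = expectation (indicator {\<omega>\<in>space M. \<not> good_block s \<mu> (G j) (\<lambda>i. X i \<omega>)})"
      by (intro Bochner_Integration.integral_cong) (auto simp: Z_eq indicator_def)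
    also have "\<dots> = prob {\<omega>\<in>space M. \<not> good_block s \<mu> (G j) (\<lambda>i. X i \<omega>)}"
      using ev by simp
    also have "\<dots> \<le> 1/10"
    proof (rule prob_not_good_block_le[OF G_j _ _ _ int1 mean int4 s])
      show "X i \<in> borel_measurable M" if "i \<in> G j" for i
        using ind G(1)[OF j] that by (auto simp: indep_vars_def)
      show "indep_var borel (X i) borel (X l)" if "i \<in> G j" "l \<in> G j" "i \<noteq> l" for i l
        using indep_vars_imp_indep_var[OF ind] G(1)[OF j] that by auto
      show "distr M borel (X i) = distr M borel X0" if "i \<in> G j" for i
        using ident G(1)[OF j] that by auto
    qed (use kurt G(2)[OF j] in simp)
    finally show ?thesis .
  qed
  show "prob Bad \<le> exp (- real k * psi (7/18) (1/10))"
    unfolding Bad_eq by (rule prob_sum_indicators_ge[OF indZ]) (use EZ in \<open>auto simp: Z_def\<close>)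
qed

section \<open>Numerical bounds\<close>

lemma psi_7_18_1_10_ge: "100/385 \<le> psi (7/18) (1/10)"
proof -
  have ln_lower: "1/26 \<le> ln (26/25::real)"
    using ln_le_minus_one[of "25/26::real"] by (simp add: ln_div)
  have ln_upper: "ln (26/25::real) \<le> 1/25"
    using ln_le_minus_one[of "26/25::real"] by simp
  have "34/26 \<le> 34 * ln (26/25::real)" using ln_lower by simp
  also have "\<dots> = ln ((26/25)^34)" by (simp add: ln_realpow)
  also have "\<dots> \<le> ln (35/9)" by (subst ln_le_cancel_iff) (simp_all add: power_divide)
  finally have a: "34/26 \<le> ln (35/9::real)" .
  have "ln (81/55::real) \<le> ln ((26/25)^10)" by (subst ln_le_cancel_iff) (simp_all add: power_divide)
  also have "\<dots> = 10 * ln (26/25)" by (simp add: ln_realpow)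
  also have "\<dots> \<le> 10/25" using ln_upper by simp
  finally have b: "ln (81/55::real) \<le> 10/25" .
  have "psi (7/18) (1/10) = 11/18 * ln (55/81) + 7/18 * ln (35/9)" unfolding psi_def by simp
  moreover have "ln (55/81::real) = - ln (81/55)" by (simp add: ln_div)
  ultimately show ?thesis using a b by simp
qed

lemma num_groups_bounds:
  assumes "0 < \<delta>" "\<delta> < 1"
  shows "real (num_groups \<delta>) \<le> 385/100 * ln (1.4 / \<delta>)"
    and "exp (- real (num_groups \<delta>) * psi (7/18) (1/10)) < \<delta>"
proof -
  define p where "p = psi (7/18) (1/10)"
  have p: "0 < p" "100/385 \<le> p" using psi_7_18_1_10_ge unfolding p_def by auto
  define x where "x = ln (1 / \<delta>) / p"
  have ln0: "0 \<le> ln (1 / \<delta>)" using assms by simp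
  then have "0 \<le> x" unfolding x_def using p by simp
  then have k: "x < real (num_groups \<delta>)" "real (num_groups \<delta>) \<le> x + 1"
    unfolding num_groups_def x_def p_def by linarith+
  have "1 / p \<le> 385/100" using p by (simp add: field_simps)
  have "x = ln (1 / \<delta>) * (1 / p)" unfolding x_def by simp
  also have "\<dots> \<le> ln (1 / \<delta>) * (385/100)" using \<open>1 / p \<le> 385/100\<close> ln0 by (rule mult_left_mono)
  finally have "x \<le> 385/100 * ln (1 / \<delta>)" by simp
  moreover have "2/7 \<le> ln (1.4::real)"
    using ln_le_minus_one[of "5/7::real"] by (simp add: ln_div)
  moreover have "ln (1.4 / \<delta>) = ln 1.4 + ln (1 / \<delta>)"
    using assms ln_mult_pos[of "1.4" "1 / \<delta>"] by simp
  ultimately show "real (num_groups \<delta>) \<le> 385/100 * ln (1.4 / \<delta>)" using k by linarith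
  have "ln (1 / \<delta>) < real (num_groups \<delta>) * p" using k(1) p unfolding x_def by (simp add: divide_less_eq)
  then have "exp (- (real (num_groups \<delta>) * p)) < exp (- ln (1 / \<delta>))" by simp
  then show "exp (- real (num_groups \<delta>) * psi (7/18) (1/10)) < \<delta>"
    using assms unfolding p_def by (simp add: ln_div)
qed

lemma sample_size_condition_bounds:
  fixes n :: nat and L s v :: real
  assumes L: "0 < L" and s: "0 < s" and n: "0 < n" and v: "0 \<le> v"
    and cond: "15.2 * sqrt (v / s\<^sup>2) \<le> (1/2 - 178 * L / real n) * sqrt (real n / L)"
  shows "356 * L \<le> real n" and "92416/100 * L * v \<le> real n * s\<^sup>2"
proof -
  have sqrt_pos: "0 < sqrt (real n / L)" using L n by simp
  have "0 \<le> 15.2 * sqrt (v / s\<^sup>2)" using v by simp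
  then have "0 \<le> 1/2 - 178 * L / real n"
    using cond sqrt_pos by (meson le_less_trans mult_neg_pos not_le)
  then show "356 * L \<le> real n" using n by (simp add: field_simps)
  have "(1/2 - 178 * L / real n) * sqrt (real n / L) \<le> 1/2 * sqrt (real n / L)"
    using L n sqrt_pos by (intro mult_right_mono) auto
  then have "15.2 * sqrt (v / s\<^sup>2) \<le> 1/2 * sqrt (real n / L)" using cond by linarith
  then have "(15.2 * sqrt (v / s\<^sup>2))\<^sup>2 \<le> (1/2 * sqrt (real n / L))\<^sup>2"
    using v by (intro power_mono) auto
  moreover have "(15.2 * sqrt (v / s\<^sup>2))\<^sup>2 = 15.2\<^sup>2 * (v / s\<^sup>2)"
    using v by (simp only: power_mult_distrib real_sqrt_pow2 divide_nonneg_nonneg zero_le_power2)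
  moreover have "(1/2 * sqrt (real n / L))\<^sup>2 = (1/2)\<^sup>2 * (real n / L)"
    using L by (simp only: power_mult_distrib real_sqrt_pow2 divide_nonneg_nonneg of_nat_0_le_iff less_imp_le)
  ultimately have "15.2\<^sup>2 * (v / s\<^sup>2) \<le> (1/2)\<^sup>2 * (real n / L)" by simp
  then show "92416/100 * L * v \<le> real n * s\<^sup>2" using L s by (simp add: field_simps)
qed

lemma block_size_bounds:
  fixes n :: nat and \<delta> s v :: real
  assumes \<delta>: "0 < \<delta>" "\<delta> < 1" and kn: "2 * num_groups \<delta> \<le> n" and s: "0 < s" and v: "0 \<le> v"
    and cond: "15.2 * sqrt (v / s\<^sup>2)
      \<le> (1/2 - 178 * ln (1.4 / \<delta>) / real n) * sqrt (real n / ln (1.4 / \<delta>))"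
  defines "m \<equiv> n div num_groups \<delta>"
  shows "92 \<le> m" and "real n \<le> 385/100 * (real m + 1) * ln (1.4 / \<delta>)"
    and "v \<le> 1/25 * (33/100 * s)\<^sup>2 * real m"
proof -
  define k where "k = num_groups \<delta>"
  define L where "L = ln (1.4 / \<delta>)"
  have k1: "1 \<le> k" unfolding k_def num_groups_def by simp
  have L0: "0 < L" unfolding L_def using \<delta> by simp
  have n0: "0 < n" using kn k1 unfolding k_def by simp
  note bounds = sample_size_condition_bounds[OF L0 s n0 v cond[folded L_def]]
  have "n < (m + 1) * k" unfolding m_def k_def[symmetric]
    using dividend_less_div_times[of k n] k1 by simp
  then have "real n < (real m + 1) * real k" by (metis of_nat_1 of_nat_add of_nat_less_iff of_nat_mult)
  also have "\<dots> \<le> (real m + 1) * (385/100 * L)"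
    using num_groups_bounds(1)[OF \<delta>] unfolding k_def L_def by (intro mult_left_mono) auto
  finally show n_le: "real n \<le> 385/100 * (real m + 1) * L" by (simp add: algebra_simps)
  then have "356 * L \<le> (385/100 * (real m + 1)) * L" using bounds(1) by simp
  then have "91 < real m" using L0 by simp
  then show m92: "92 \<le> m" by simp
  have "92416/100 * L * v \<le> 385/100 * (real m + 1) * L * s\<^sup>2"
    using bounds(2) mult_right_mono[OF n_le, of "s\<^sup>2"] by simp
  also have "\<dots> \<le> 385/100 * (93/92 * real m) * L * s\<^sup>2"
    using m92 L0 by (intro mult_right_mono) auto
  finally have "92416/100 * v \<le> 385/100 * (93/92 * real m) * s\<^sup>2" using L0 by simp
  then have "v \<le> (385/100 * 93/92 / (92416/100)) * (real m * s\<^sup>2)" by (simp add: field_simps)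
  also have "\<dots> \<le> (1/25 * (33/100)\<^sup>2) * (real m * s\<^sup>2)"
    by (intro mult_right_mono) (auto simp: power_divide)
  also have "\<dots> = 1/25 * (33/100 * s)\<^sup>2 * real m" by (simp only: power_mult_distrib mult_ac)
  finally show "v \<le> 1/25 * (33/100 * s)\<^sup>2 * real m" .
qed

lemma median_radius_le:
  fixes m n :: nat and L s T :: real
  assumes L: "0 < L" and s: "0 < s" and m: "92 \<le> m" and n: "0 < n"
    and nm: "real n \<le> 385/100 * (real m + 1) * L"
    and T: "(67/100 - 1 / (6/100 * real m)) * s \<le> T"
  shows "13/10 * sqrt (s / (6/100 * real m)) \<le> 11 * sqrt 2 * sqrt (T * L / real n)"
proof -
  have m92: "92 \<le> real m" using m by simp
  define c where "c = 67/100 - 1 / (6/100 * real m)"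
  have "1 / (6/100 * real m) \<le> 1 / (6/100 * 92)" using m92 by (intro divide_left_mono) auto
  then have c0: "0 < c" unfolding c_def by simp
  have cm: "6/100 * real m * c = 402/10000 * real m - 1" unfolding c_def using m92 by (simp add: field_simps)
  have "169/100 * real n \<le> 169/100 * (385/100 * (real m + 1) * L)" by (rule mult_left_mono[OF nm]) simp
  also have "\<dots> = (169/100 * (385/100 * (real m + 1))) * L" by simp
  also have "\<dots> \<le> 242 * (402/10000 * real m - 1) * L" using m92 L by (intro mult_right_mono) auto
  finally have key: "169/100 * real n \<le> 242 * (6/100 * real m * c) * L" unfolding cm .
  have "169/100 * (s / (6/100 * real m)) = s * (169/100 * real n) / (6/100 * real m * real n)"
    using m92 n by (simp add: field_simps)
  also have "\<dots> \<le> s * (242 * (6/100 * real m * c) * L) / (6/100 * real m * real n)"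
    using key s m92 n by (intro divide_right_mono mult_left_mono) auto
  also have "\<dots> = 242 * (c * s * L / real n)" using m92 n by (simp add: field_simps)
  also have "\<dots> \<le> 242 * (T * L / real n)"
    using T L n unfolding c_def by (intro mult_left_mono divide_right_mono mult_right_mono) auto
  finally have sq: "169/100 * (s / (6/100 * real m)) \<le> 242 * (T * L / real n)" .
  have TLn: "0 \<le> T * L / real n" using T c0 s L unfolding c_def[symmetric]
    by (intro divide_nonneg_nonneg mult_nonneg_nonneg) (auto intro: order_trans[rotated])
  have "0 \<le> s / (6/100 * real m)" using s m92 by simp
  then have "(13/10 * sqrt (s / (6/100 * real m)))\<^sup>2 = (13/10)\<^sup>2 * (s / (6/100 * real m))"
    by (simp only: power_mult_distrib real_sqrt_pow2)
  also have "\<dots> \<le> 11\<^sup>2 * 2 * (T * L / real n)" using sq by (simp add: power_divide)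
  also have "\<dots> = (11 * sqrt 2 * sqrt (T * L / real n))\<^sup>2"
    using TLn by (simp only: power_mult_distrib real_sqrt_pow2 zero_le_numeral)
  finally show ?thesis by (rule power2_le_imp_le) (use TLn in simp)
qed

section \<open>The confidence ball\<close>

lemma median_of_means_dist_le:
  fixes x :: "nat \<Rightarrow> 'a::real_inner"
  assumes card: "\<And>j. j < k \<Longrightarrow> card (G j) = m" and m: "92 \<le> m" and s0: "0 < s"
    and L0: "0 < L" and n0: "0 < n" and nm: "real n \<le> 385/100 * (real m + 1) * L"
    and few_bad: "18 * card {j\<in>{..<k}. \<not> good_block s \<mu> (G j) x} < 7 * k"
    and med_mean: "is_geometric_median k (\<lambda>j. block_mean (G j) x) z"
    and med_var: "is_geometric_median k (\<lambda>j. block_var (G j) x) T"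
  shows "norm (z - \<mu>) \<le> 11 * sqrt 2 * sqrt (T * L / real n)"
proof -
  have "0 < m" using m by simp
  note bounds = median_of_blocks_bounds[OF card this s0 few_bad med_mean med_var]
  show ?thesis using bounds(1) median_radius_le[OF L0 s0 m n0 nm bounds(2)] by linarith
qed

theorem mainTheorem9:
  fixes M :: "'b measure"
    and X :: "nat \<Rightarrow> 'b \<Rightarrow> 'a::{real_inner, banach, second_countable_topology}"
    and \<mu> :: 'a
    and n :: nat and \<delta> :: real
    and G :: "nat \<Rightarrow> nat set"
    and \<mu>hat :: "'b \<Rightarrow> 'a" and That :: "'b \<Rightarrow> real"
  assumes "prob_space M"
    and rv: "\<And>i. i < n \<Longrightarrow> X i \<in> borel_measurable M"
    and indep: "prob_space.indep_vars M (\<lambda>_. borel) X {..<n}"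
    and ident: "\<And>i. i < n \<Longrightarrow> distr M borel (X i) = distr M borel (X 0)"
    and int1: "integrable M (X 0)"
    and mean: "prob_space.expectation M (X 0) = \<mu>"
    and int4: "integrable M (\<lambda>\<omega>. norm (X 0 \<omega> - \<mu>) ^ 4)"
    and trpos: "prob_space.expectation M (\<lambda>\<omega>. norm (X 0 \<omega> - \<mu>) ^ 2) > 0"
    and \<delta>: "0 < \<delta>" "\<delta> < 1"
    and kn: "2 * num_groups \<delta> \<le> n"
    and G_sub: "\<And>j. j < num_groups \<delta> \<Longrightarrow> G j \<subseteq> {..<n}"
    and G_card: "\<And>j. j < num_groups \<delta> \<Longrightarrow> card (G j) = n div num_groups \<delta>"
    and G_disj: "\<And>j j'. j < num_groups \<delta> \<Longrightarrow> j' < num_groups \<delta> \<Longrightarrow> j \<noteq> j' \<Longrightarrow>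
                   G j \<inter> G j' = {}"
    and med_mu: "\<And>\<omega>. \<omega> \<in> space M \<Longrightarrow> is_geometric_median (num_groups \<delta>)
                   (\<lambda>j. (1 / real (card (G j))) *\<^sub>R (\<Sum>i\<in>G j. X i \<omega>)) (\<mu>hat \<omega>)"
    and med_T: "\<And>\<omega>. \<omega> \<in> space M \<Longrightarrow> is_geometric_median (num_groups \<delta>)
                   (\<lambda>j. (1 / real (card (G j))) *
                      (\<Sum>i\<in>G j. (norm (X i \<omega> -
                         (1 / real (card (G j))) *\<^sub>R (\<Sum>l\<in>G j. X l \<omega>))) ^ 2)) (That \<omega>)"
    and cond: "15.2 * sqrt ((prob_space.expectation M (\<lambda>\<omega>. norm (X 0 \<omega> - \<mu>) ^ 4)
                   - (prob_space.expectation M (\<lambda>\<omega>. norm (X 0 \<omega> - \<mu>) ^ 2)) ^ 2)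
                 / (prob_space.expectation M (\<lambda>\<omega>. norm (X 0 \<omega> - \<mu>) ^ 2)) ^ 2)
               \<le> (1/2 - 178 * ln (1.4 / \<delta>) / real n) * sqrt (real n / ln (1.4 / \<delta>))"
  shows "\<exists>A\<in>sets M. A \<subseteq> {\<omega>\<in>space M.
            \<mu> \<in> cball (\<mu>hat \<omega>) (11 * sqrt 2 * sqrt (That \<omega> * ln (1.4 / \<delta>) / real n))}
          \<and> measure M A \<ge> 1 - 2 * \<delta>"
proof -
  interpret prob_space M by fact
  define k where "k = num_groups \<delta>"
  define m where "m = n div k"
  define L where "L = ln (1.4 / \<delta>)"
  define s where "s = expectation (\<lambda>\<omega>. norm (X 0 \<omega> - \<mu>) ^ 2)"
  have s0: "0 < s" using trpos unfolding s_def .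
  have "integrable M (\<lambda>\<omega>. ((norm (X 0 \<omega> - \<mu>))\<^sup>2)\<^sup>2)" using int4 by (simp flip: power_mult)
  from square_integrable_variance(4)[OF _ this] int1
  have "0 \<le> expectation (\<lambda>\<omega>. norm (X 0 \<omega> - \<mu>) ^ 4) - s\<^sup>2"
    unfolding s_def by (simp flip: power_mult)
  note sizes = block_size_bounds[OF \<delta> kn s0 this cond[folded s_def], folded k_def, folded m_def L_def]
  have m0: "0 < m" using sizes(1) by simp
  have n0: "0 < n" using kn unfolding num_groups_def by simp
  have L0: "0 < L" unfolding L_def using \<delta> by simp
  define Bad
    where "Bad = {\<omega>\<in>space M. 7 * k \<le> 18 * card {j\<in>{..<k}. \<not> good_block s \<mu> (G j) (\<lambda>i. X i \<omega>)}}"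
  have "disjoint_family_on G {..<k}" using G_disj unfolding k_def disjoint_family_on_def by auto
  note bad = prob_many_bad_blocks[OF indep ident int1 mean int4 s_def s0 _ _ this m0, folded Bad_def]
  have Bad: "Bad \<in> events" "prob Bad < \<delta>"
    using bad num_groups_bounds(2)[OF \<delta>] sizes(3) G_sub G_card unfolding k_def m_def by force+
  have "norm (\<mu>hat \<omega> - \<mu>) \<le> 11 * sqrt 2 * sqrt (That \<omega> * L / real n)"
    if \<omega>: "\<omega> \<in> space M - Bad" for \<omega>
  proof -
    have "18 * card {j\<in>{..<k}. \<not> good_block s \<mu> (G j) (\<lambda>i. X i \<omega>)} < 7 * k"
      using \<omega> unfolding Bad_def by auto
    from median_of_means_dist_le[OF _ sizes(1) s0 L0 n0 sizes(2) this, of "\<mu>hat \<omega>" "That \<omega>"]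
    show ?thesis
      using G_card med_mu med_T \<omega> unfolding k_def m_def block_var_def block_mean_def by auto
  qed
  then show ?thesis
    using Bad prob_compl[of Bad] \<delta> unfolding L_def
    by (intro bexI[of _ "space M - Bad"]) (auto simp: dist_norm norm_minus_commute)
qed

end
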